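(* Let $\mathcal H$ be the $5$-uniform hypergraph defined below, let $e,f$ be two edges of $\mathcal H$, and let $\phi : V(\mathcal{H}_{ef}) \to V(\mathcal{H})$ be a monomorphism. If one of $e,f$ lies in $\{b, e_5\}$ and the other lies in $\{r, g, a\}$, then $\phi$ is the identity.
   Context: $\mathcal{H}$ has vertex set $\{z, v_1,\dots,v_9\}$ and edges $r=\{z,v_1,v_3,v_5,v_8\}$, $g=\{z,v_2,v_4,v_7,v_9\}$, $a=\{v_1,v_4,v_6,v_8,v_9\}$, $b=\{v_9,v_1,v_2,v_3,v_4\}$, and $e_i=\{v_i,v_{i+1},v_{i+2},v_{i+3},v_{i+4}\}$ for $i=1,\dots,5$. $\mathcal{H}_{ef}$ is the hypergraph with edge set $E(\mathcal H)\setminus\{e,f\}$, and $V(\mathcal H_{ef})$ is the union of its edges. A monomorphism $\phi: V(\mathcal{H}_{ef})\to V(\mathcal{H})$ is an injective map such that $\{\phi(y): y\in x\}$ is an edge of $\mathcal H$ for every edge $x$ of $\mathcal H_{ef}$; "identity" means $\phi(y)=y$ for all $y\in V(\mathcal H_{ef})$. *)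

theory Defs
  imports Main
begin

definition hz :: nat where "hz = 0"
definition hv :: "nat \<Rightarrow> nat" where "hv i = i"

definition H_vertices :: "nat set" where
  "H_vertices = insert hz (hv ` {1..9})"

definition edge_r :: "nat set" where "edge_r = {hz, hv 1, hv 3, hv 5, hv 8}"
definition edge_g :: "nat set" where "edge_g = {hz, hv 2, hv 4, hv 7, hv 9}"
definition edge_a :: "nat set" where "edge_a = {hv 1, hv 4, hv 6, hv 8, hv 9}"
definition edge_b :: "nat set" where "edge_b = {hv 9, hv 1, hv 2, hv 3, hv 4}"
definition edge_e :: "nat \<Rightarrow> nat set" where
  "edge_e i = {hv i, hv (i+1), hv (i+2), hv (i+3), hv (i+4)}"

definition H_edges :: "nat set set" where
  "H_edges = {edge_r, edge_g, edge_a, edge_b} \<union> edge_e ` {1..5}"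

definition Hef_edges :: "nat set \<Rightarrow> nat set \<Rightarrow> nat set set" where
  "Hef_edges e f = H_edges - {e, f}"

definition Hef_vertices :: "nat set \<Rightarrow> nat set \<Rightarrow> nat set" where
  "Hef_vertices e f = \<Union> (Hef_edges e f)"

definition monomorphism_Hef :: "nat set \<Rightarrow> nat set \<Rightarrow> (nat \<Rightarrow> nat) \<Rightarrow> bool" where
  "monomorphism_Hef e f \<phi> \<longleftrightarrow>
     inj_on \<phi> (Hef_vertices e f) \<and> \<phi> ` Hef_vertices e f \<subseteq> H_vertices \<and>
     (\<forall>x \<in> Hef_edges e f. \<phi> ` x \<in> H_edges)"

end

theory Submission
  imports Defs
begin

text \<open>A monomorphism \<open>\<phi>\<close> from \<open>\<H>\<^sub>e\<^sub>f\<close> to \<open>\<H>\<close> can be found by backtracking over the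
  vertices of \<open>\<H>\<^sub>e\<^sub>f\<close>: a vertex \<open>v\<close> may only go to a vertex of degree at least \<open>deg v\<close>
  (distinct edges through \<open>v\<close> have distinct images through \<open>\<phi> v\<close>), and a partial assignment
  is kept only while it is injective and every edge of \<open>\<H>\<^sub>e\<^sub>f\<close> still fits into an edge of \<open>\<H>\<close>.
  Every monomorphism passes all these tests, so it is among the outputs of the search; evaluating
  the search in the six cases shows that its only output is the identity.\<close>

definition consistent :: "'a list list \<Rightarrow> 'b list list \<Rightarrow> ('a \<times> 'b) list \<Rightarrow> bool" where
  "consistent Es Fs m \<longleftrightarrow> distinct (map snd m) \<and>
     (\<forall>X\<in>set Es. \<exists>Y\<in>set Fs. \<forall>(u, w)\<in>set m. u \<in> set X \<longrightarrow> w \<in> set Y)"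

text \<open>Only the edges through \<open>v\<close> are tested: completeness of the search needs no more than
  that consistency of \<open>m @ [(v, w)]\<close> implies the test.\<close>

definition compatible :: "'a list list \<Rightarrow> 'b list list \<Rightarrow> ('a \<times> 'b) list \<Rightarrow> 'a \<Rightarrow> 'b \<Rightarrow> bool" where
  "compatible Es Fs m v w \<longleftrightarrow> w \<notin> set (map snd m) \<and>
     (\<forall>X\<in>set (filter (\<lambda>X. v \<in> set X) Es).
        \<exists>Y\<in>set Fs. w \<in> set Y \<and> (\<forall>(u, w')\<in>set m. u \<in> set X \<longrightarrow> w' \<in> set Y))"

text \<open>The recursion is first order on purpose: under a \<open>\<lambda>\<close>-bound candidate, \<open>code_simp\<close>
  would unfold the whole search symbolically.\<close>

fun extensions :: "'a list list \<Rightarrow> 'b list list \<Rightarrow> ('a \<times> 'b list) list \<Rightarrow>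
    ('a \<times> 'b) list \<Rightarrow> ('a \<times> 'b) list list" where
  "extensions Es Fs [] m = [m]"
| "extensions Es Fs ((v, []) # vws) m = []"
| "extensions Es Fs ((v, w # ws) # vws) m =
     (if compatible Es Fs m v w then extensions Es Fs vws (m @ [(v, w)]) else []) @
     extensions Es Fs ((v, ws) # vws) m"

lemma consistent_appendD: "consistent Es Fs (m @ m') \<Longrightarrow> consistent Es Fs m"
  unfolding consistent_def by fastforce

lemma consistent_snoc_compatible:
  "consistent Es Fs (m @ [(v, w)]) \<Longrightarrow> compatible Es Fs m v w"
  unfolding consistent_def compatible_def by fastforce

lemma extensions_complete:
  assumes "consistent Es Fs (m @ map (\<lambda>(v, _). (v, \<phi> v)) vws)"
    and "\<forall>(v, ws)\<in>set vws. \<phi> v \<in> set ws"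
  shows "m @ map (\<lambda>(v, _). (v, \<phi> v)) vws \<in> set (extensions Es Fs vws m)"
  using assms
proof (induction Es Fs vws m rule: extensions.induct)
  case (3 Es Fs v w ws vws m)
  show ?case
  proof (cases "w = \<phi> v")
    case True
    have "consistent Es Fs (m @ [(v, w)] @ map (\<lambda>(v, _). (v, \<phi> v)) vws)"
      using "3.prems"(1) True by simp
    moreover from this have "compatible Es Fs m v w"
      using consistent_appendD consistent_snoc_compatible by (metis append_assoc)
    ultimately show ?thesis
      using "3.IH"(1) "3.prems"(2) True by auto
  next
    case False
    then show ?thesis using "3.IH"(2) "3.prems" by auto
  qed
qed auto

lemma consistent_graph:
  assumes "distinct vs" and "inj_on \<phi> (set vs)"
    and "\<forall>X\<in>set Es. \<exists>Y\<in>set Fs. \<phi> ` set X \<subseteq> set Y"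
  shows "consistent Es Fs (map (\<lambda>v. (v, \<phi> v)) vs)"
  using assms unfolding consistent_def
  by (fastforce simp: comp_def distinct_map)

definition degree :: "'a list list \<Rightarrow> 'a \<Rightarrow> nat" where
  "degree Es v = length (filter (\<lambda>X. v \<in> set X) Es)"

lemma degree_le_degree_image:
  assumes distinct: "distinct (map set Es)"
    and inj: "inj_on \<phi> (\<Union>X\<in>set Es. set X)"
    and edges: "\<forall>X\<in>set Es. \<exists>Y\<in>set Fs. \<phi> ` set X = set Y"
  shows "degree Es v \<le> degree Fs (\<phi> v)"
proof -
  let ?A = "set (filter (\<lambda>X. v \<in> set X) Es)"
  let ?B = "set (filter (\<lambda>Y. \<phi> v \<in> set Y) Fs)"
  have "inj_on (\<lambda>X. \<phi> ` set X) ?A"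
  proof (rule inj_onI)
    fix X X' assume "X \<in> ?A" "X' \<in> ?A" and "\<phi> ` set X = \<phi> ` set X'"
    moreover have "set X \<subseteq> (\<Union>X\<in>set Es. set X)" "set X' \<subseteq> (\<Union>X\<in>set Es. set X)"
      using \<open>X \<in> ?A\<close> \<open>X' \<in> ?A\<close> by auto
    ultimately have "set X = set X'"
      using inj_on_image_eq_iff[OF inj] by blast
    with \<open>X \<in> ?A\<close> \<open>X' \<in> ?A\<close> show "X = X'"
      using distinct by (auto simp: distinct_map inj_on_def)
  qed
  moreover have "(\<lambda>X. \<phi> ` set X) ` ?A \<subseteq> set ` ?B"
    using edges by fastforce
  ultimately have "card ?A \<le> card (set ` ?B)"
    by (metis card_inj_on_le finite_imageI finite_set)
  also have "\<dots> \<le> length (filter (\<lambda>Y. \<phi> v \<in> set Y) Fs)"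
    by (metis card_image_le card_length finite_set le_trans)
  also have "card ?A = degree Es v"
    using distinct by (simp only: degree_def distinct_card distinct_filter distinct_map)
  finally show ?thesis
    by (simp only: degree_def)
qed

definition degree_candidates :: "'a list list \<Rightarrow> 'b list list \<Rightarrow> 'a \<Rightarrow> 'b list" where
  "degree_candidates Es Fs v = filter (\<lambda>w. degree Es v \<le> degree Fs w) (remdups (concat Fs))"

definition vertex_order :: "'a list list \<Rightarrow> 'a list" where
  "vertex_order Es = sort_key (\<lambda>v. length Es - degree Es v) (remdups (concat Es))"

definition search_yields_identity :: "'a list list \<Rightarrow> 'a list list \<Rightarrow> bool" where
  "search_yields_identity Es Fs \<longleftrightarrow>
     extensions Es Fs (map (\<lambda>v. (v, degree_candidates Es Fs v)) (vertex_order Es)) [] =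
       [map (\<lambda>v. (v, v)) (vertex_order Es)]"

lemma search_yields_identity_imp_fixed:
  assumes search: "search_yields_identity Es Fs"
    and distinct: "distinct (map set Es)"
    and inj: "inj_on \<phi> (\<Union>X\<in>set Es. set X)"
    and edges: "\<forall>X\<in>set Es. \<exists>Y\<in>set Fs. \<phi> ` set X = set Y"
  shows "\<forall>v\<in>(\<Union>X\<in>set Es. set X). \<phi> v = v"
proof -
  define vs where "vs = vertex_order Es"
  define vws where "vws = map (\<lambda>v. (v, degree_candidates Es Fs v)) vs"
  have vs: "distinct vs" "set vs = (\<Union>X\<in>set Es. set X)"
    by (simp_all add: vs_def vertex_order_def)
  have "\<phi> v \<in> set (degree_candidates Es Fs v)" if "v \<in> set vs" for v
  proof -
    from that vs(2) obtain X Y where "X \<in> set Es" "v \<in> set X" "Y \<in> set Fs" "\<phi> ` set X = set Y"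
      using edges by blast
    then show ?thesis
      using degree_le_degree_image[OF distinct inj edges]
      by (auto simp: degree_candidates_def)
  qed
  then have "\<forall>(v, ws)\<in>set vws. \<phi> v \<in> set ws"
    by (auto simp: vws_def)
  moreover have "\<forall>X\<in>set Es. \<exists>Y\<in>set Fs. \<phi> ` set X \<subseteq> set Y"
    using edges by blast
  then have "consistent Es Fs (map (\<lambda>(v, _). (v, \<phi> v)) vws)"
    using consistent_graph[OF vs(1), of \<phi> Es Fs] inj vs(2)
    by (simp add: vws_def comp_def)
  ultimately have "map (\<lambda>(v, _). (v, \<phi> v)) vws \<in> set (extensions Es Fs vws [])"
    using extensions_complete[of Es Fs "[]"] by simp
  then have "map (\<lambda>v. (v, \<phi> v)) vs = map (\<lambda>v. (v, v)) vs"
    using search by (simp add: search_yields_identity_def vws_def vs_def comp_def)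
  then show ?thesis
    using vs(2) by (simp add: map_eq_conv)
qed

definition H_edge_lists :: "nat list list" where
  "H_edge_lists = [[0,1,3,5,8], [0,2,4,7,9], [1,4,6,8,9], [1,2,3,4,9],
     [1,2,3,4,5], [2,3,4,5,6], [3,4,5,6,7], [4,5,6,7,8], [5,6,7,8,9]]"

definition Hef_edge_lists :: "nat list \<Rightarrow> nat list \<Rightarrow> nat list list" where
  "Hef_edge_lists eL fL = filter (\<lambda>l. l \<noteq> eL \<and> l \<noteq> fL) H_edge_lists"

lemma edges_eq_sets:
  "edge_r = set [0,1,3,5,8]" "edge_g = set [0,2,4,7,9]" "edge_a = set [1,4,6,8,9]"
  "edge_b = set [1,2,3,4,9]" "edge_e 1 = set [1,2,3,4,5]" "edge_e 2 = set [2,3,4,5,6]"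
  "edge_e 3 = set [3,4,5,6,7]" "edge_e 4 = set [4,5,6,7,8]" "edge_e 5 = set [5,6,7,8,9]"
  by (auto simp: edge_r_def edge_g_def edge_a_def edge_b_def edge_e_def hz_def hv_def)

lemma H_edges_eq: "H_edges = set (map set H_edge_lists)"
proof -
  have "{1..5::nat} = {1, 2, 3, 4, 5}"
    by auto
  then have "edge_e ` {1..5} = {edge_e 1, edge_e 2, edge_e 3, edge_e 4, edge_e 5}"
    by simp
  then show ?thesis
    unfolding H_edges_def H_edge_lists_def edges_eq_sets by (simp add: insert_commute)
qed

lemma distinct_H_edge_sets: "distinct (map set H_edge_lists)"
  by code_simp

lemma Hef_edges_eq:
  assumes "eL \<in> set H_edge_lists" and "fL \<in> set H_edge_lists"
  shows "Hef_edges (set eL) (set fL) = set (map set (Hef_edge_lists eL fL))"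
proof -
  have "inj_on set (set H_edge_lists)"
    using distinct_H_edge_sets by (simp add: distinct_map)
  then show ?thesis
    using assms by (auto simp: Hef_edges_def Hef_edge_lists_def H_edges_eq inj_on_def)
qed

lemma Hef_monomorphism_fixed:
  assumes "eL \<in> set H_edge_lists" and "fL \<in> set H_edge_lists"
    and "search_yields_identity (Hef_edge_lists eL fL) H_edge_lists"
    and "monomorphism_Hef (set eL) (set fL) \<phi>"
  shows "\<forall>y\<in>Hef_vertices (set eL) (set fL). \<phi> y = y"
proof -
  let ?Es = "Hef_edge_lists eL fL"
  have distinct: "distinct (map set ?Es)"
    using distinct_H_edge_sets
    by (auto simp: Hef_edge_lists_def distinct_map intro: inj_on_subset)
  have inj: "inj_on \<phi> (\<Union>X\<in>set ?Es. set X)"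
    and images: "\<forall>X\<in>set ?Es. \<phi> ` set X \<in> set ` set H_edge_lists"
    using assms(4)
    unfolding monomorphism_Hef_def Hef_vertices_def Hef_edges_eq[OF assms(1,2)] H_edges_eq
    by auto
  from images have "\<forall>X\<in>set ?Es. \<exists>Y\<in>set H_edge_lists. \<phi> ` set X = set Y"
    by blast
  then show ?thesis
    using search_yields_identity_imp_fixed[OF assms(3) distinct inj]
    unfolding Hef_vertices_def Hef_edges_eq[OF assms(1,2)] by auto
qed

lemma search_yields_identity_without_b:
  assumes "fL \<in> {[0,1,3,5,8], [0,2,4,7,9], [1,4,6,8,9]}"
  shows "search_yields_identity (Hef_edge_lists [1,2,3,4,9] fL) H_edge_lists"
  using assms by (auto; code_simp)

lemma search_yields_identity_without_e5:
  assumes "fL \<in> {[0,1,3,5,8], [0,2,4,7,9], [1,4,6,8,9]}"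
  shows "search_yields_identity (Hef_edge_lists [5,6,7,8,9] fL) H_edge_lists"
  using assms by (auto; code_simp)

lemma Hef_swap: "Hef_edges e f = Hef_edges f e"
  by (auto simp: Hef_edges_def)

lemma fixed_removing_b_or_e5:
  assumes "e \<in> {edge_b, edge_e 5}" and "f \<in> {edge_r, edge_g, edge_a}"
    and "monomorphism_Hef e f \<phi>"
  shows "\<forall>y\<in>Hef_vertices e f. \<phi> y = y"
proof -
  obtain eL fL where "e = set eL" "f = set fL"
    and "eL \<in> {[1,2,3,4,9], [5,6,7,8,9]}" "fL \<in> {[0,1,3,5,8], [0,2,4,7,9], [1,4,6,8,9]}"
    using assms(1,2) unfolding edges_eq_sets by blast
  moreover from this have "eL \<in> set H_edge_lists" "fL \<in> set H_edge_lists"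
    by (auto simp: H_edge_lists_def)
  ultimately show ?thesis
    using Hef_monomorphism_fixed search_yields_identity_without_b search_yields_identity_without_e5
      assms(3)
    by blast
qed

theorem lemma4p11:
  assumes "e \<in> H_edges" and "f \<in> H_edges"
    and "(e \<in> {edge_b, edge_e 5} \<and> f \<in> {edge_r, edge_g, edge_a}) \<or>
         (f \<in> {edge_b, edge_e 5} \<and> e \<in> {edge_r, edge_g, edge_a})"
    and "monomorphism_Hef e f \<phi>"
  shows "\<forall>y \<in> Hef_vertices e f. \<phi> y = y"
  using assms(3) fixed_removing_b_or_e5[OF _ _ assms(4)]
    fixed_removing_b_or_e5[of f e \<phi>] assms(4)
  by (auto simp: monomorphism_Hef_def Hef_vertices_def Hef_swap[of e f])

end
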